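(* Let $\mathcal H=\mathbb C^2$ with reference basis the eigenbasis $\{|0\rangle,|1\rangle\}$ of $\sigma_z$, and let the Hamiltonian be $H(t)=\varepsilon_0\mathbb I_2+\tfrac{\omega(t)}{2}\sigma_z$ (diagonal in that basis). Let $\Phi$ be a qubit CPTP map that is phase covariant with respect to $\sigma_z$, i.e. $e^{-i\phi\sigma_z}\Phi[\rho]e^{i\phi\sigma_z}=\Phi[e^{-i\phi\sigma_z}\rho e^{i\phi\sigma_z}]$ for all $\phi\in\mathbb R$ and all $\rho$. Then for every initial qubit state $\rho_i$ the coherence fluctuation distance vanishes: $\mathfrak D_c(\rho_i)=0$.
   Context: EPM distribution: for a state $\rho$, $p_{\rm coh}^{l,k}(\rho)=\mathrm{Tr}(\rho\Pi^i_l)\,\mathrm{Tr}(\Phi[\rho]\Pi^f_k)$, where $\Pi^i_l$ and $\Pi^f_k$ are the projectors onto the energy eigenbasis (here $|0\rangle\langle0|,|1\rangle\langle1|$) at the initial and final times. Coherence fluctuation distance: $\mathfrak D_c(\rho_i)=\min_{\rho^{\mathcal I}\in\mathscr I}D_{KL}\big(p_{\rm coh}(\rho_i)\,\|\,p_{\rm coh}(\rho^{\mathcal I})\big)$, where $\mathscr I$ is the set of states diagonal in the eigenbasis of the initial Hamiltonian and $D_{KL}(p\|q)=\sum_x p_x\ln(p_x/q_x)$. *)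

theory Defs
  imports Complex_Main "HOL-Library.Extended_Real" "Jordan_Normal_Form.Matrix"
begin

text \<open>Qubit operators are complex 2x2 matrices (Jordan_Normal_Form), in the reference
  basis |0>, |1> (the sigma_z eigenbasis = energy eigenbasis of H(t)).\<close>

definition tr :: "complex mat \<Rightarrow> complex" where
  "tr A = (\<Sum>i<dim_row A. A $$ (i, i))"

definition psd :: "nat \<Rightarrow> complex mat \<Rightarrow> bool" where
  "psd n A \<longleftrightarrow> A \<in> carrier_mat n n \<and>
     (\<forall>v :: nat \<Rightarrow> complex.
        Im (\<Sum>i<n. \<Sum>j<n. cnj (v i) * A $$ (i, j) * v j) = 0 \<and>
        Re (\<Sum>i<n. \<Sum>j<n. cnj (v i) * A $$ (i, j) * v j) \<ge> 0)"

definition density :: "complex mat \<Rightarrow> bool" where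
  "density \<rho> \<longleftrightarrow> psd 2 \<rho> \<and> tr \<rho> = 1"

definition qubit_linear :: "(complex mat \<Rightarrow> complex mat) \<Rightarrow> bool" where
  "qubit_linear \<Phi> \<longleftrightarrow>
     (\<forall>A \<in> carrier_mat 2 2. \<Phi> A \<in> carrier_mat 2 2) \<and>
     (\<forall>A \<in> carrier_mat 2 2. \<forall>B \<in> carrier_mat 2 2. \<Phi> (A + B) = \<Phi> A + \<Phi> B) \<and>
     (\<forall>A \<in> carrier_mat 2 2. \<forall>c. \<Phi> (c \<cdot>\<^sub>m A) = c \<cdot>\<^sub>m \<Phi> A)"

text \<open>(id_k \<otimes> \<Phi>) applied to a 2k x 2k matrix viewed as k x k blocks of 2x2 matrices.\<close>
definition ampl :: "(complex mat \<Rightarrow> complex mat) \<Rightarrow> nat \<Rightarrow> complex mat \<Rightarrow> complex mat" where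
  "ampl \<Phi> k M = mat (2*k) (2*k) (\<lambda>(i, j).
      \<Phi> (mat 2 2 (\<lambda>(a, b). M $$ (2 * (i div 2) + a, 2 * (j div 2) + b))) $$ (i mod 2, j mod 2))"

definition completely_positive :: "(complex mat \<Rightarrow> complex mat) \<Rightarrow> bool" where
  "completely_positive \<Phi> \<longleftrightarrow> (\<forall>k \<ge> 1. \<forall>M. psd (2*k) M \<longrightarrow> psd (2*k) (ampl \<Phi> k M))"

definition trace_preserving :: "(complex mat \<Rightarrow> complex mat) \<Rightarrow> bool" where
  "trace_preserving \<Phi> \<longleftrightarrow> (\<forall>A \<in> carrier_mat 2 2. tr (\<Phi> A) = tr A)"

definition CPTP :: "(complex mat \<Rightarrow> complex mat) \<Rightarrow> bool" where
  "CPTP \<Phi> \<longleftrightarrow> qubit_linear \<Phi> \<and> completely_positive \<Phi> \<and> trace_preserving \<Phi>"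

text \<open>exp(-i phi sigma_z) = diag(e^{-i phi}, e^{i phi}).\<close>
definition Uz :: "real \<Rightarrow> complex mat" where
  "Uz \<phi> = mat 2 2 (\<lambda>(a, b). if a = b then (if a = 0 then cis (-\<phi>) else cis \<phi>) else 0)"

definition phase_covariant :: "(complex mat \<Rightarrow> complex mat) \<Rightarrow> bool" where
  "phase_covariant \<Phi> \<longleftrightarrow> (\<forall>\<phi>::real. \<forall>\<rho> \<in> carrier_mat 2 2.
      Uz \<phi> * \<Phi> \<rho> * Uz (-\<phi>) = \<Phi> (Uz \<phi> * \<rho> * Uz (-\<phi>)))"

definition proj :: "nat \<Rightarrow> complex mat" where
  "proj l = mat 2 2 (\<lambda>(a, b). if a = l \<and> b = l then 1 else 0)"

definition p_coh :: "(complex mat \<Rightarrow> complex mat) \<Rightarrow> complex mat \<Rightarrow> nat \<times> nat \<Rightarrow> real" where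
  "p_coh \<Phi> \<rho> = (\<lambda>(l, k). Re (tr (\<rho> * proj l) * tr (\<Phi> \<rho> * proj k)))"

definition KL :: "'a set \<Rightarrow> ('a \<Rightarrow> real) \<Rightarrow> ('a \<Rightarrow> real) \<Rightarrow> ereal" where
  "KL X p q = (\<Sum>x\<in>X. if p x = 0 then 0 else if q x = 0 then \<infinity>
                        else ereal (p x * ln (p x / q x)))"

definition incoherent :: "complex mat \<Rightarrow> bool" where
  "incoherent \<sigma> \<longleftrightarrow> density \<sigma> \<and> \<sigma> $$ (0, 1) = 0 \<and> \<sigma> $$ (1, 0) = 0"

definition coh_fluct_dist :: "(complex mat \<Rightarrow> complex mat) \<Rightarrow> complex mat \<Rightarrow> ereal" where
  "coh_fluct_dist \<Phi> \<rho> =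
     (INF \<sigma> \<in> {\<sigma>. incoherent \<sigma>}. KL ({0,1} \<times> {0,1}) (p_coh \<Phi> \<rho>) (p_coh \<Phi> \<sigma>))"

end

theory Submission
  imports Defs
begin

text \<open>Conjugating by \<open>Uz (pi/2)\<close> fixes the diagonal of a qubit operator and negates its
  off-diagonal entries, so averaging \<open>\<rho>\<close> with its conjugate is the full dephasing of \<open>\<rho>\<close>, an
  incoherent state. By linearity and phase covariance, \<open>\<Phi>\<close> maps the dephased state to the
  average of \<open>\<Phi> \<rho>\<close> and its conjugate, which has the same diagonal as \<open>\<Phi> \<rho>\<close>. The EPM
  distribution only sees diagonal entries, so it is the same for \<open>\<rho>\<close> and its dephasing:
  their Kullback-Leibler divergence is \<open>0\<close>, which by Gibbs' inequality is the minimum.\<close>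

lemma index_mult_mat_2:
  assumes "A \<in> carrier_mat 2 2" "B \<in> carrier_mat 2 2" "i < 2" "j < 2"
  shows "(A * B) $$ (i, j) = A $$ (i, 0) * B $$ (0, j) + A $$ (i, 1) * B $$ (1, j)"
  using assms by (simp add: scalar_prod_def eval_nat_numeral row_def col_def)

lemma tr_mult_proj:
  assumes "A \<in> carrier_mat 2 2" "l < 2"
  shows "tr (A * proj l) = A $$ (l, l)"
  using assms unfolding tr_def proj_def
  by (auto simp add: eval_nat_numeral less_Suc_eq scalar_prod_def)

lemma psd_diag:
  assumes "psd n A" "i < n"
  shows "Im (A $$ (i, i)) = 0" "Re (A $$ (i, i)) \<ge> 0"
proof -
  let ?e = "\<lambda>x. of_bool (x = i) :: complex"
  have "cnj (?e a) * A $$ (a, b) * ?e b = (if b = i then if a = i then A $$ (i, i) else 0 else 0)"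
    for a b
    by simp
  then have "(\<Sum>a<n. \<Sum>b<n. cnj (?e a) * A $$ (a, b) * ?e b) = A $$ (i, i)"
    using assms(2) by simp
  moreover have "Im (\<Sum>a<n. \<Sum>b<n. cnj (?e a) * A $$ (a, b) * ?e b) = 0 \<and>
      Re (\<Sum>a<n. \<Sum>b<n. cnj (?e a) * A $$ (a, b) * ?e b) \<ge> 0"
    using assms(1) unfolding psd_def by (elim conjE spec)
  ultimately show "Im (A $$ (i, i)) = 0" "Re (A $$ (i, i)) \<ge> 0"
    by simp_all
qed

lemma ampl_1:
  assumes "A \<in> carrier_mat 2 2" "\<Phi> A \<in> carrier_mat 2 2"
  shows "ampl \<Phi> 1 A = \<Phi> A"
proof -
  have "mat 2 2 (\<lambda>(a, b). A $$ (2 * (i div 2) + a, 2 * (j div 2) + b)) = A"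
    if "i < 2" "j < 2" for i j
    using that assms(1) by (intro eq_matI) auto
  then show ?thesis
    unfolding ampl_def using assms(2) by (intro eq_matI) auto
qed

lemma density_carrier: "density \<rho> \<Longrightarrow> \<rho> \<in> carrier_mat 2 2"
  unfolding density_def psd_def by blast

lemma CPTP_density:
  assumes "CPTP \<Phi>" "density \<rho>"
  shows "density (\<Phi> \<rho>)"
proof -
  have \<rho>: "\<rho> \<in> carrier_mat 2 2"
    using assms(2) by (rule density_carrier)
  then have "\<Phi> \<rho> \<in> carrier_mat 2 2"
    using assms(1) unfolding CPTP_def qubit_linear_def by blast
  moreover have "psd (2 * 1) (ampl \<Phi> 1 \<rho>)"
    using assms unfolding CPTP_def completely_positive_def density_def by auto
  ultimately have "psd 2 (\<Phi> \<rho>)"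
    using ampl_1[OF \<rho>] by simp
  moreover have "tr (\<Phi> \<rho>) = 1"
    using assms \<rho> unfolding CPTP_def trace_preserving_def density_def by auto
  ultimately show ?thesis
    unfolding density_def by simp
qed

lemma density_diag_real:
  assumes "density \<rho>" "i < 2"
  shows "\<rho> $$ (i, i) = of_real (Re (\<rho> $$ (i, i)))" "Re (\<rho> $$ (i, i)) \<ge> 0"
  using psd_diag[of 2 \<rho> i] assms unfolding density_def by (simp_all add: complex_eq_iff)

lemma density_diag_sum:
  assumes "density \<rho>"
  shows "\<rho> $$ (0, 0) + \<rho> $$ (1, 1) = 1"
  using assms density_carrier[OF assms] unfolding density_def by (simp add: tr_def eval_nat_numeral)

lemma p_coh_diag:
  assumes "\<rho> \<in> carrier_mat 2 2" "\<Phi> \<rho> \<in> carrier_mat 2 2" "l < 2" "k < 2"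
  shows "p_coh \<Phi> \<rho> (l, k) = Re (\<rho> $$ (l, l) * \<Phi> \<rho> $$ (k, k))"
  using assms by (simp add: p_coh_def tr_mult_proj)

lemma p_coh_density:
  assumes "CPTP \<Phi>" "density \<rho>" "l < 2" "k < 2"
  shows "p_coh \<Phi> \<rho> (l, k) = Re (\<rho> $$ (l, l)) * Re (\<Phi> \<rho> $$ (k, k))"
proof -
  have \<Phi>\<rho>: "density (\<Phi> \<rho>)"
    using assms(1,2) by (rule CPTP_density)
  show ?thesis
    unfolding p_coh_diag[of \<rho> \<Phi>, OF density_carrier[OF assms(2)] density_carrier[OF \<Phi>\<rho>] assms(3,4)]
    by (subst density_diag_real(1)[OF assms(2,3)], subst density_diag_real(1)[OF \<Phi>\<rho> assms(4)]) simp
qed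

lemma p_coh_nonneg:
  assumes "CPTP \<Phi>" "density \<rho>" "x \<in> {0, 1} \<times> {0, 1}"
  shows "p_coh \<Phi> \<rho> x \<ge> 0"
  using assms density_diag_real(2)[OF assms(2)] density_diag_real(2)[OF CPTP_density[OF assms(1,2)]]
  by (auto simp: p_coh_density)

lemma sum_p_coh:
  assumes "CPTP \<Phi>" "density \<rho>"
  shows "(\<Sum>x\<in>{0, 1} \<times> {0, 1}. p_coh \<Phi> \<rho> x) = 1"
proof -
  have "(\<Sum>x\<in>{0, 1} \<times> {0, 1}. p_coh \<Phi> \<rho> x)
      = (Re (\<rho> $$ (0, 0)) + Re (\<rho> $$ (1, 1))) * (Re (\<Phi> \<rho> $$ (0, 0)) + Re (\<Phi> \<rho> $$ (1, 1)))"
    using assms by (simp add: p_coh_density algebra_simps)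
  also have "\<dots> = 1"
    using density_diag_sum[OF assms(2)] density_diag_sum[OF CPTP_density[OF assms]]
    by (metis mult_1 one_complex.sel(1) plus_complex.sel(1))
  finally show ?thesis .
qed

lemma KL_nonneg:
  fixes p q :: "'a \<Rightarrow> real"
  assumes "finite X" "\<forall>x\<in>X. p x \<ge> 0" "\<forall>x\<in>X. q x \<ge> 0" "sum p X = 1" "sum q X = 1"
  shows "KL X p q \<ge> 0"
proof -
  have "ereal (p x - q x)
      \<le> (if p x = 0 then 0 else if q x = 0 then \<infinity> else ereal (p x * ln (p x / q x)))"
    if "x \<in> X" for x
  proof -
    consider "p x = 0" | "p x \<noteq> 0" "q x = 0" | "p x > 0" "q x > 0"
      using assms(2,3) \<open>x \<in> X\<close> by force
    then show ?thesis
    proof cases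
      case 1
      then show ?thesis using assms(3) \<open>x \<in> X\<close> by simp
    next
      case 2
      then show ?thesis by simp
    next
      case 3
      have "p x * ln (q x / p x) \<le> p x * (q x / p x - 1)"
        using 3 by (intro mult_left_mono ln_le_minus_one) simp_all
      then have "p x - q x \<le> p x * ln (p x / q x)"
        using 3 by (simp add: ln_div right_diff_distrib)
      then show ?thesis using 3 by simp
    qed
  qed
  then have "(\<Sum>x\<in>X. ereal (p x - q x)) \<le> KL X p q"
    unfolding KL_def by (rule sum_mono)
  moreover have "(\<Sum>x\<in>X. ereal (p x - q x)) = 0"
    using assms by (simp add: sum_subtractf)
  ultimately show ?thesis by (metis zero_ereal_def)
qed

lemma KL_self: "KL X p p = 0"
  unfolding KL_def by (intro sum.neutral) simp

definition dephase :: "complex mat \<Rightarrow> complex mat" where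
  "dephase \<rho> = mat 2 2 (\<lambda>(a, b). if a = b then \<rho> $$ (a, a) else 0)"

lemma Uz_carrier: "Uz \<phi> \<in> carrier_mat 2 2"
  by (simp add: Uz_def)

lemma index_Uz_conj:
  assumes "A \<in> carrier_mat 2 2" "i < 2" "j < 2"
  shows "(Uz \<phi> * A * Uz (-\<phi>)) $$ (i, j) = cis (2 * \<phi> * (real i - real j)) * A $$ (i, j)"
proof -
  have UA: "Uz \<phi> * A \<in> carrier_mat 2 2"
    using Uz_carrier assms(1) by (rule mult_carrier_mat)
  have cis_sandwich: "cis a * x * cis b = cis (a + b) * x" for a b x
    by (simp add: cis_mult[symmetric] mult_ac)
  have i: "i = 0 \<or> i = 1" and j: "j = 0 \<or> j = 1"
    using assms(2,3) by auto
  have "(Uz \<phi> * A) $$ (i, k) = (if i = 0 then cis (-\<phi>) else cis \<phi>) * A $$ (i, k)" if "k < 2" for k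
    unfolding index_mult_mat_2[OF Uz_carrier assms(1) assms(2) that]
    using i by (auto simp: Uz_def)
  then show ?thesis
    unfolding index_mult_mat_2[OF UA Uz_carrier assms(2,3)]
    using i j by (elim disjE) (simp_all add: Uz_def cis_sandwich)
qed

lemma dephase_eq_twirl:
  assumes "\<rho> \<in> carrier_mat 2 2"
  shows "dephase \<rho> = (1/2) \<cdot>\<^sub>m (\<rho> + Uz (pi/2) * \<rho> * Uz (-(pi/2)))"
proof (rule eq_matI)
  fix i j
  assume "i < dim_row ((1/2) \<cdot>\<^sub>m (\<rho> + Uz (pi/2) * \<rho> * Uz (-(pi/2))))"
    "j < dim_col ((1/2) \<cdot>\<^sub>m (\<rho> + Uz (pi/2) * \<rho> * Uz (-(pi/2))))"
  then have "i < 2" "j < 2"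
    using assms by (simp_all add: Uz_def)
  moreover have "cis (pi * (real i - real j)) = (if i = j then 1 else -1)" if "i < 2" "j < 2"
    using that by (auto simp: less_Suc_eq eval_nat_numeral complex_eq_iff)
  ultimately show "dephase \<rho> $$ (i, j) = ((1/2) \<cdot>\<^sub>m (\<rho> + Uz (pi/2) * \<rho> * Uz (-(pi/2)))) $$ (i, j)"
    using assms index_Uz_conj[OF assms, of i j "pi/2"]
    by (simp add: dephase_def Uz_def)
qed (use assms in \<open>simp_all add: dephase_def Uz_def\<close>)

lemma incoherent_dephase:
  assumes "density \<rho>"
  shows "incoherent (dephase \<rho>)"
proof -
  have "psd 2 (dephase \<rho>)"
    unfolding psd_def
  proof (intro conjI allI)
    show "dephase \<rho> \<in> carrier_mat 2 2"
      by (simp add: dephase_def)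
    fix v :: "nat \<Rightarrow> complex"
    have "(\<Sum>i<2. \<Sum>j<2. cnj (v i) * dephase \<rho> $$ (i, j) * v j)
        = (v 0 * cnj (v 0)) * \<rho> $$ (0, 0) + (v 1 * cnj (v 1)) * \<rho> $$ (1, 1)"
      by (simp add: dephase_def eval_nat_numeral mult_ac)
    also have "\<dots> = of_real ((cmod (v 0))\<^sup>2 * Re (\<rho> $$ (0, 0)) + (cmod (v 1))\<^sup>2 * Re (\<rho> $$ (1, 1)))"
      by (subst (1 2) density_diag_real(1)[OF assms]) (simp_all add: complex_norm_square[symmetric])
    finally have "(\<Sum>i<2. \<Sum>j<2. cnj (v i) * dephase \<rho> $$ (i, j) * v j)
        = of_real ((cmod (v 0))\<^sup>2 * Re (\<rho> $$ (0, 0)) + (cmod (v 1))\<^sup>2 * Re (\<rho> $$ (1, 1)))" .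
    then show "Im (\<Sum>i<2. \<Sum>j<2. cnj (v i) * dephase \<rho> $$ (i, j) * v j) = 0"
      "Re (\<Sum>i<2. \<Sum>j<2. cnj (v i) * dephase \<rho> $$ (i, j) * v j) \<ge> 0"
      using density_diag_real(2)[OF assms] by simp_all
  qed
  moreover have "tr (dephase \<rho>) = 1"
    using density_diag_sum[OF assms] by (simp add: tr_def dephase_def eval_nat_numeral)
  ultimately show ?thesis
    unfolding incoherent_def density_def by (simp add: dephase_def)
qed

lemma phase_covariant_diag_dephase:
  assumes "qubit_linear \<Phi>" "phase_covariant \<Phi>" "\<rho> \<in> carrier_mat 2 2" "k < 2"
  shows "\<Phi> (dephase \<rho>) $$ (k, k) = \<Phi> \<rho> $$ (k, k)"
proof -
  let ?U = "Uz (pi/2)" and ?U' = "Uz (-(pi/2))"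
  have U\<rho>: "?U * \<rho> * ?U' \<in> carrier_mat 2 2" and \<Phi>\<rho>: "\<Phi> \<rho> \<in> carrier_mat 2 2"
    using assms(1,3) by (auto simp: Uz_def qubit_linear_def)
  have "\<Phi> (dephase \<rho>) = (1/2) \<cdot>\<^sub>m (\<Phi> \<rho> + \<Phi> (?U * \<rho> * ?U'))"
    using assms(1,3) U\<rho> unfolding dephase_eq_twirl[OF assms(3)] qubit_linear_def by auto
  also have "\<Phi> (?U * \<rho> * ?U') = ?U * \<Phi> \<rho> * ?U'"
    using assms(2,3) unfolding phase_covariant_def by simp
  finally show ?thesis
    using assms(4) \<Phi>\<rho> index_Uz_conj[OF \<Phi>\<rho> assms(4) assms(4)] by (simp add: Uz_def)
qed

lemma p_coh_dephase:
  assumes "CPTP \<Phi>" "phase_covariant \<Phi>" "density \<rho>" "x \<in> {0, 1} \<times> {0, 1}"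
  shows "p_coh \<Phi> (dephase \<rho>) x = p_coh \<Phi> \<rho> x"
proof -
  have lin: "qubit_linear \<Phi>"
    using assms(1) unfolding CPTP_def by blast
  have \<rho>: "\<rho> \<in> carrier_mat 2 2"
    using assms(3) by (rule density_carrier)
  have "dephase \<rho> \<in> carrier_mat 2 2" "\<Phi> (dephase \<rho>) \<in> carrier_mat 2 2" "\<Phi> \<rho> \<in> carrier_mat 2 2"
    using lin \<rho> by (auto simp: dephase_def qubit_linear_def)
  then show ?thesis
    using assms(4) \<rho> p_coh_diag phase_covariant_diag_dephase[OF lin assms(2) \<rho>]
    by (auto simp: dephase_def)
qed

theorem theorem1:
  fixes \<Phi> :: "complex mat \<Rightarrow> complex mat" and \<rho>i :: "complex mat"
  assumes "CPTP \<Phi>"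
    and "phase_covariant \<Phi>"
    and "density \<rho>i"
  shows "coh_fluct_dist \<Phi> \<rho>i = 0
         \<and> (\<exists>\<sigma>. incoherent \<sigma> \<and>
              KL ({0,1} \<times> {0,1}) (p_coh \<Phi> \<rho>i) (p_coh \<Phi> \<sigma>) = coh_fluct_dist \<Phi> \<rho>i)"
proof -
  let ?D = "\<lambda>\<sigma>. KL ({0,1} \<times> {0,1}) (p_coh \<Phi> \<rho>i) (p_coh \<Phi> \<sigma>)"
  have inc: "incoherent (dephase \<rho>i)"
    using assms(3) by (rule incoherent_dephase)
  have "?D (dephase \<rho>i) = ?D \<rho>i"
    unfolding KL_def using p_coh_dephase[OF assms] by (intro sum.cong) auto
  then have zero: "?D (dephase \<rho>i) = 0"
    by (simp add: KL_self)
  have nonneg: "?D \<sigma> \<ge> 0" if "incoherent \<sigma>" for \<sigma>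
  proof -
    have "density \<sigma>"
      using that unfolding incoherent_def by blast
    with assms(1,3) show ?thesis
      by (intro KL_nonneg ballI p_coh_nonneg sum_p_coh) simp_all
  qed
  have "coh_fluct_dist \<Phi> \<rho>i = 0"
    unfolding coh_fluct_dist_def
  proof (rule antisym)
    show "(INF \<sigma>\<in>{\<sigma>. incoherent \<sigma>}. ?D \<sigma>) \<le> 0"
      using inc zero by (metis INF_lower mem_Collect_eq)
    show "0 \<le> (INF \<sigma>\<in>{\<sigma>. incoherent \<sigma>}. ?D \<sigma>)"
      using nonneg by (auto intro: INF_greatest)
  qed
  then show ?thesis
    using inc zero by auto
qed

end
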